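(* On $R_\delta=\bigoplus_{k\ge0}R^k$, the operators $H$, $i(\alpha)$ and $X$ satisfy \[[i(\alpha),X]=H,\qquad [H,i(\alpha)]=i(\alpha),\qquad [H,X]=-X,\] hence define a representation of $sl(2,\mathbb{R})$ on $R_\delta$.
   Context: Let $n\ge1$, $M=\mathbb{R}^{2n+1}$ with coordinates $(q^1,\dots,q^n,p^1,\dots,p^n,t)$. For $\mu\in\mathbb{R}$, $\mathcal{S}^k_\mu$ denotes the space of smooth functions $S(x,\xi)$ on $M\times\mathbb{R}^{2n+1}$ homogeneous polynomial of degree $k$ in $\xi=(\xi_{q^1},\dots,\xi_{q^n},\xi_{p^1},\dots,\xi_{p^n},\xi_t)$ (symmetric contravariant tensor fields with coefficients in $\mu$-densities). Fix $\delta\in\mathbb{R}$ and set $R^k=\mathcal{S}^k_{\delta+\frac{k}{n+1}}$ for $k\ge0$, $R^{-1}=0$. Let $E_s=\sum_i(p^i\partial_{p^i}+q^i\partial_{q^i})$, $\langle E_s,\xi\rangle=\sum_i(p^i\xi_{p^i}+q^i\xi_{q^i})$, $D(S)=\sum_i(\xi_{q^i}\partial_{p^i}S-\xi_{p^i}\partial_{q^i}S)+\xi_tE_s(S)-\langle E_s,\xi\rangle\partial_tS$. Operators on $R_\delta$: $i(\alpha):R^k\to R^{k-1}$, $i(\alpha)(S)=\frac12\big(\sum_i(p^i\partial_{\xi_{q^i}}S-q^i\partial_{\xi_{p^i}}S)-\partial_{\xi_t}S\big)$; $X:R^k\to R^{k+1}$, $X(S)=D(S)+(2(n+1)\delta+k)\xi_tS$;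 and $H$ acts on $R^k$ as $h_k\,\mathrm{Id}$ with $h_k=-((n+1)\delta+k)$. *)

theory Defs
  imports "HOL-Analysis.Analysis"
begin

text \<open>Points of M = R^(2n+1) (and covectors xi) are triples (q, p, t) with
  q, p in R^n (index type 'n, n = CARD('n) >= 1) and t in R.
  A symbol is a real function of (x, xi).\<close>

type_synonym 'n pt = "(real^'n) \<times> (real^'n) \<times> real"
type_synonym 'n sym = "'n pt \<times> 'n pt \<Rightarrow> real"

definition dd :: "'a::real_normed_vector \<Rightarrow> ('a \<Rightarrow> real) \<Rightarrow> 'a \<Rightarrow> real" where
  "dd v f z = deriv (\<lambda>s. f (z + s *\<^sub>R v)) 0"

fun ddl :: "'a::real_normed_vector list \<Rightarrow> ('a \<Rightarrow> real) \<Rightarrow> 'a \<Rightarrow> real" where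
  "ddl [] f = f"
| "ddl (v # vs) f = dd v (ddl vs f)"

definition smooth_fun :: "('a::euclidean_space \<Rightarrow> real) \<Rightarrow> bool" where
  "smooth_fun f \<longleftrightarrow> (\<forall>vs z. ddl vs f differentiable (at z))"

definition hom_poly :: "nat \<Rightarrow> ('a::euclidean_space \<Rightarrow> real) \<Rightarrow> bool" where
  "hom_poly k g \<longleftrightarrow> (\<exists>A c. finite A \<and> (\<forall>\<alpha>\<in>A. (\<Sum>b\<in>Basis. \<alpha> b) = k) \<and>
      (\<forall>\<xi>. g \<xi> = (\<Sum>\<alpha>\<in>A. c \<alpha> * (\<Prod>b\<in>Basis. (\<xi> \<bullet> b) ^ \<alpha> b))))"

text \<open>R^k: smooth symbols, homogeneous polynomial of degree k in xi
  (the density weight does not enter the formulas).\<close>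
definition Rk :: "nat \<Rightarrow> ('n::finite) sym set" where
  "Rk k = {S. smooth_fun S \<and> (\<forall>x. hom_poly k (\<lambda>\<xi>. S (x, \<xi>)))}"

definition cq :: "'n::finite \<Rightarrow> 'n pt \<times> 'n pt \<Rightarrow> real" where "cq i z = fst (fst z) $ i"
definition cp :: "'n::finite \<Rightarrow> 'n pt \<times> 'n pt \<Rightarrow> real" where "cp i z = fst (snd (fst z)) $ i"
definition xq :: "'n::finite \<Rightarrow> 'n pt \<times> 'n pt \<Rightarrow> real" where "xq i z = fst (snd z) $ i"
definition xp :: "'n::finite \<Rightarrow> 'n pt \<times> 'n pt \<Rightarrow> real" where "xp i z = fst (snd (snd z)) $ i"
definition xt :: "('n::finite) pt \<times> 'n pt \<Rightarrow> real" where "xt z = snd (snd (snd z))"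

definition d_q :: "'n::finite \<Rightarrow> 'n sym \<Rightarrow> 'n sym" where
  "d_q i S = dd ((axis i 1, 0, 0), 0) S"
definition d_p :: "'n::finite \<Rightarrow> 'n sym \<Rightarrow> 'n sym" where
  "d_p i S = dd ((0, axis i 1, 0), 0) S"
definition d_t :: "('n::finite) sym \<Rightarrow> 'n sym" where
  "d_t S = dd ((0, 0, 1), 0) S"
definition d_xq :: "'n::finite \<Rightarrow> 'n sym \<Rightarrow> 'n sym" where
  "d_xq i S = dd (0, (axis i 1, 0, 0)) S"
definition d_xp :: "'n::finite \<Rightarrow> 'n sym \<Rightarrow> 'n sym" where
  "d_xp i S = dd (0, (0, axis i 1, 0)) S"
definition d_xt :: "('n::finite) sym \<Rightarrow> 'n sym" where
  "d_xt S = dd (0, (0, 0, 1)) S"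

definition Es :: "('n::finite) sym \<Rightarrow> 'n sym" where
  "Es S z = (\<Sum>i\<in>UNIV. cp i z * d_p i S z + cq i z * d_q i S z)"
definition Es_xi :: "('n::finite) pt \<times> 'n pt \<Rightarrow> real" where
  "Es_xi z = (\<Sum>i\<in>UNIV. cp i z * xp i z + cq i z * xq i z)"

definition Dop :: "('n::finite) sym \<Rightarrow> 'n sym" where
  "Dop S z = (\<Sum>i\<in>UNIV. xq i z * d_p i S z - xp i z * d_q i S z)
             + xt z * Es S z - Es_xi z * d_t S z"

definition ialpha :: "('n::finite) sym \<Rightarrow> 'n sym" where
  "ialpha S z = (1/2) * ((\<Sum>i\<in>UNIV. cp i z * d_xq i S z - cq i z * d_xp i S z) - d_xt S z)"

definition Xop :: "real \<Rightarrow> int \<Rightarrow> ('n::finite) sym \<Rightarrow> 'n sym" where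
  "Xop \<delta> k S z = Dop S z + (2 * (real CARD('n) + 1) * \<delta> + of_int k) * xt z * S z"

definition hk :: "nat \<Rightarrow> real \<Rightarrow> int \<Rightarrow> real" where
  "hk n \<delta> k = - ((real n + 1) * \<delta> + of_int k)"

definition Hop :: "real \<Rightarrow> int \<Rightarrow> ('n::finite) sym \<Rightarrow> 'n sym" where
  "Hop \<delta> k S z = hk CARD('n) \<delta> k * S z"

end

theory Submission
  imports Defs
begin

text \<open>The operators i(alpha) and D are derivations along vector fields a and b on
  T*M = R^(2n+1) x R^(2n+1) (ialpha_field and Dop_field). Since second derivatives
  of a smooth symbol commute, the commutator of the two derivations is the derivative along
  the Lie bracket [a, b] = -1/2 E - xi_t a, where E = (0, xi) is the Euler field of the fibre,
  and E acts on R^k as multiplication by k. The zeroth-order term c_k xi_t of X, with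
  c_k = 2(n+1) delta + k, contributes a(xi_t) = -1/2, and since c_k - c_(k-1) = 1 it cancels
  the -xi_t a part of the bracket; what is left is -(k + c_k)/2 = h_k. The other two relations
  only use that H is a scalar on each R^k while i(alpha) and X lower and raise the degree by one.\<close>

lemma dd_eq_derivative:
  assumes "(f has_derivative f') (at z)"
  shows "dd v f z = f' v"
proof -
  have "((\<lambda>s::real. z + s *\<^sub>R v) has_derivative (\<lambda>s. s *\<^sub>R v)) (at 0)"
    by (auto intro!: derivative_eq_intros)
  from has_derivative_compose[OF this] assms
  have "((\<lambda>s::real. f (z + s *\<^sub>R v)) has_derivative (\<lambda>s. f' (s *\<^sub>R v))) (at 0)"
    by simp
  moreover have "(\<lambda>s. f' (s *\<^sub>R v)) = (*) (f' v)"
    using linear_cmul[OF has_derivative_linear[OF assms]] by auto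
  ultimately have "((\<lambda>s. f (z + s *\<^sub>R v)) has_real_derivative f' v) (at 0)"
    by (simp add: has_field_derivative_def)
  then show ?thesis by (simp add: dd_def DERIV_imp_deriv)
qed

lemma has_derivative_dd:
  assumes "f differentiable (at z)"
  shows "(f has_derivative (\<lambda>v. dd v f z)) (at z)"
proof -
  obtain f' where f': "(f has_derivative f') (at z)"
    using assms by (auto simp: differentiable_def)
  moreover have "(\<lambda>v. dd v f z) = f'"
    using dd_eq_derivative[OF f'] by auto
  ultimately show ?thesis by simp
qed

lemma linear_dd:
  assumes "f differentiable (at z)"
  shows "linear (\<lambda>v. dd v f z)"
  using has_derivative_dd[OF assms] by (rule has_derivative_linear)

lemma dd_eq_sum_Basis:
  fixes f :: "'a::euclidean_space \<Rightarrow> real"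
  assumes "f differentiable (at z)"
  shows "dd v f z = (\<Sum>e\<in>Basis. (v \<bullet> e) * dd e f z)"
proof -
  have "dd v f z = dd (\<Sum>e\<in>Basis. (v \<bullet> e) *\<^sub>R e) f z"
    by (simp add: euclidean_representation)
  also have "\<dots> = (\<Sum>e\<in>Basis. (v \<bullet> e) * dd e f z)"
    by (simp add: real_vector.linear_sum[OF linear_dd[OF assms]] linear_cmul[OF linear_dd[OF assms]])
  finally show ?thesis .
qed

lemma dd_add:
  assumes "f differentiable (at z)" "g differentiable (at z)"
  shows "dd v (\<lambda>y. f y + g y) z = dd v f z + dd v g z"
  using dd_eq_derivative[OF has_derivative_add[OF assms[THEN has_derivative_dd]]] .

lemma dd_mult:
  assumes "f differentiable (at z)" "g differentiable (at z)"
  shows "dd v (\<lambda>y. f y * g y) z = f z * dd v g z + dd v f z * g z"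
  using dd_eq_derivative[OF has_derivative_mult[OF assms[THEN has_derivative_dd]]] .

lemma dd_cmult:
  assumes "f differentiable (at z)"
  shows "dd v (\<lambda>y. c * f y) z = c * dd v f z"
  using dd_eq_derivative[OF has_derivative_mult_right[OF has_derivative_dd[OF assms]]] .

lemma has_real_derivative_dd_line:
  assumes "f differentiable (at (y + r *\<^sub>R u))"
  shows "((\<lambda>s. f (y + s *\<^sub>R u)) has_real_derivative dd u f (y + r *\<^sub>R u)) (at r)"
proof -
  let ?x = "y + r *\<^sub>R u"
  have "((\<lambda>s::real. y + s *\<^sub>R u) has_derivative (\<lambda>s. s *\<^sub>R u)) (at r)"
    by (auto intro!: derivative_eq_intros)
  from has_derivative_compose[OF this has_derivative_dd[OF assms]]
  have "((\<lambda>s. f (y + s *\<^sub>R u)) has_derivative (\<lambda>s. dd (s *\<^sub>R u) f ?x)) (at r)"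
    by simp
  moreover have "(\<lambda>s. dd (s *\<^sub>R u) f ?x) = (*) (dd u f ?x)"
    using linear_cmul[OF linear_dd[OF assms]] by auto
  ultimately show ?thesis by (simp add: has_field_derivative_def)
qed

lemma second_difference_mvt:
  fixes f :: "'a::real_normed_vector \<Rightarrow> real"
  assumes f: "\<And>y. f differentiable (at y)" and f_u: "\<And>y. dd u f differentiable (at y)"
    and "h > 0"
  obtains \<sigma> \<tau> where "0 < \<sigma>" "\<sigma> < h" "0 < \<tau>" "\<tau> < h"
    "f (z + h *\<^sub>R u + h *\<^sub>R v) - f (z + h *\<^sub>R u) - f (z + h *\<^sub>R v) + f z
     = h * h * dd v (dd u f) (z + \<sigma> *\<^sub>R u + \<tau> *\<^sub>R v)"
proof -
  define g where "g r = f (z + h *\<^sub>R v + r *\<^sub>R u) - f (z + r *\<^sub>R u)" for r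
  have "(g has_real_derivative dd u f (z + h *\<^sub>R v + r *\<^sub>R u) - dd u f (z + r *\<^sub>R u)) (at r)"
    for r unfolding g_def by (intro DERIV_diff has_real_derivative_dd_line f)
  then obtain \<sigma> where \<sigma>: "0 < \<sigma>" "\<sigma> < h"
    "g h - g 0 = h * (dd u f (z + h *\<^sub>R v + \<sigma> *\<^sub>R u) - dd u f (z + \<sigma> *\<^sub>R u))"
    using MVT2[OF \<open>h > 0\<close>, of g] by force
  define k where "k s = dd u f (z + \<sigma> *\<^sub>R u + s *\<^sub>R v)" for s
  have "(k has_real_derivative dd v (dd u f) (z + \<sigma> *\<^sub>R u + s *\<^sub>R v)) (at s)"
    for s unfolding k_def by (intro has_real_derivative_dd_line f_u)
  then obtain \<tau> where \<tau>: "0 < \<tau>" "\<tau> < h"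
    "k h - k 0 = h * dd v (dd u f) (z + \<sigma> *\<^sub>R u + \<tau> *\<^sub>R v)"
    using MVT2[OF \<open>h > 0\<close>, of k] by force
  have "f (z + h *\<^sub>R u + h *\<^sub>R v) - f (z + h *\<^sub>R u) - f (z + h *\<^sub>R v) + f z = g h - g 0"
    by (simp add: g_def algebra_simps)
  also have "\<dots> = h * (k h - k 0)"
    by (simp add: \<sigma>(3) k_def algebra_simps)
  finally show ?thesis
    using that \<sigma>(1,2) \<tau> by simp
qed

lemma dd_commute:
  fixes f :: "'a::real_normed_vector \<Rightarrow> real"
  assumes f: "\<And>y. f differentiable (at y)"
    and f_u: "\<And>y. dd u f differentiable (at y)" and f_v: "\<And>y. dd v f differentiable (at y)"
    and cont_uv: "continuous (at z) (dd v (dd u f))" and cont_vu: "continuous (at z) (dd u (dd v f))"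
  shows "dd v (dd u f) z = dd u (dd v f) z"
proof (rule ccontr)
  let ?F = "dd v (dd u f)" and ?G = "dd u (dd v f)"
  assume "?F z \<noteq> ?G z"
  define e where "e = \<bar>?F z - ?G z\<bar> / 2"
  have "e > 0" using \<open>?F z \<noteq> ?G z\<close> by (simp add: e_def)
  obtain d1 where d1: "d1 > 0" "\<And>x. dist x z < d1 \<Longrightarrow> dist (?F x) (?F z) < e"
    using cont_uv \<open>e > 0\<close> unfolding continuous_at_eps_delta by blast
  obtain d2 where d2: "d2 > 0" "\<And>x. dist x z < d2 \<Longrightarrow> dist (?G x) (?G z) < e"
    using cont_vu \<open>e > 0\<close> unfolding continuous_at_eps_delta by blast
  have norms_pos: "norm u + norm v + 1 > 0"
    by (simp add: add_nonneg_pos)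
  define h where "h = min d1 d2 / (2 * (norm u + norm v + 1))"
  have h: "h > 0" using d1(1) d2(1) norms_pos by (simp add: h_def)
  have near: "dist (z + s *\<^sub>R u + t *\<^sub>R v) z < min d1 d2"
    if "0 < s" "s < h" "0 < t" "t < h" for s t
  proof -
    have "dist (z + s *\<^sub>R u + t *\<^sub>R v) z \<le> s * norm u + t * norm v"
      using that norm_triangle_ineq[of "s *\<^sub>R u" "t *\<^sub>R v"] by (simp add: dist_norm)
    also have "\<dots> \<le> h * (norm u + norm v + 1)"
      using that by (simp add: distrib_left add_mono mult_right_mono add_increasing2)
    also have "\<dots> = min d1 d2 / 2"
      using norms_pos by (simp add: h_def field_simps)
    also have "\<dots> < min d1 d2"
      using d1(1) d2(1) by (simp add: min_def)
    finally show ?thesis .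
  qed
  obtain s1 t1 where st1: "0 < s1" "s1 < h" "0 < t1" "t1 < h"
    "f (z + h *\<^sub>R u + h *\<^sub>R v) - f (z + h *\<^sub>R u) - f (z + h *\<^sub>R v) + f z
     = h * h * ?F (z + s1 *\<^sub>R u + t1 *\<^sub>R v)"
    using second_difference_mvt[OF f f_u h] .
  obtain s2 t2 where st2: "0 < s2" "s2 < h" "0 < t2" "t2 < h"
    "f (z + h *\<^sub>R v + h *\<^sub>R u) - f (z + h *\<^sub>R v) - f (z + h *\<^sub>R u) + f z
     = h * h * ?G (z + s2 *\<^sub>R v + t2 *\<^sub>R u)"
    using second_difference_mvt[OF f f_v h] .
  \<comment> \<open>the second difference is symmetric in u and v\<close>
  have same: "?F (z + s1 *\<^sub>R u + t1 *\<^sub>R v) = ?G (z + t2 *\<^sub>R u + s2 *\<^sub>R v)"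
    using st1(5) st2(5) h by (simp add: algebra_simps)
  have "dist (?F (z + s1 *\<^sub>R u + t1 *\<^sub>R v)) (?F z) < e"
    using d1(2) near[OF st1(1-4)] by simp
  moreover have "dist (?G (z + t2 *\<^sub>R u + s2 *\<^sub>R v)) (?G z) < e"
    using d2(2) near[OF st2(3,4,1,2)] by simp
  ultimately show False
    unfolding same dist_real_def e_def by (simp add: abs_if split: if_splits)
qed

lemma smooth_fun_differentiable: "smooth_fun f \<Longrightarrow> f differentiable (at z)"
  unfolding smooth_fun_def by (metis ddl.simps(1))

lemma smooth_fun_differentiable_dd: "smooth_fun f \<Longrightarrow> dd v f differentiable (at z)"
  unfolding smooth_fun_def by (metis ddl.simps)

lemma smooth_fun_differentiable_dd_dd: "smooth_fun f \<Longrightarrow> dd u (dd v f) differentiable (at z)"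
  unfolding smooth_fun_def by (metis ddl.simps)

lemma smooth_fun_dd_commute: "smooth_fun f \<Longrightarrow> dd v (dd u f) z = dd u (dd v f) z"
  by (intro dd_commute smooth_fun_differentiable smooth_fun_differentiable_dd
      differentiable_imp_continuous_within smooth_fun_differentiable_dd_dd)

lemma has_derivative_dd_field:
  fixes f :: "'a::euclidean_space \<Rightarrow> real"
  assumes f: "smooth_fun f" and b: "(b has_derivative b') (at z)"
  shows "((\<lambda>y. dd (b y) f y) has_derivative (\<lambda>w. dd w (dd (b z) f) z + dd (b' w) f z)) (at z)"
proof -
  have dd_coordinates: "dd v f = (\<lambda>y. \<Sum>e\<in>Basis. (v \<bullet> e) * dd e f y)" for v
    using dd_eq_sum_Basis[OF smooth_fun_differentiable[OF f]] by blast
  have "((\<lambda>y. \<Sum>e\<in>Basis. (b y \<bullet> e) * dd e f y) has_derivative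
      (\<lambda>w. \<Sum>e\<in>Basis. (b z \<bullet> e) * dd w (dd e f) z + (b' w \<bullet> e) * dd e f z)) (at z)"
    by (intro has_derivative_sum has_derivative_mult has_derivative_inner_left b
        has_derivative_dd smooth_fun_differentiable_dd f)
  moreover have "((\<lambda>y. \<Sum>e\<in>Basis. (b z \<bullet> e) * dd e f y) has_derivative
      (\<lambda>w. \<Sum>e\<in>Basis. (b z \<bullet> e) * dd w (dd e f) z)) (at z)"
    by (intro has_derivative_sum has_derivative_mult_right has_derivative_dd
        smooth_fun_differentiable_dd f)
  then have "dd w (dd (b z) f) z = (\<Sum>e\<in>Basis. (b z \<bullet> e) * dd w (dd e f) z)" for w
    unfolding dd_coordinates[of "b z"] by (rule dd_eq_derivative)
  ultimately show ?thesis
    using dd_coordinates[of "b' _", THEN fun_cong]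
    by (simp add: dd_coordinates[of "b _", THEN fun_cong] sum.distrib)
qed

lemma dd_field_commutator:
  fixes f :: "'a::euclidean_space \<Rightarrow> real"
  assumes f: "smooth_fun f" and "(a has_derivative a') (at z)" "(b has_derivative b') (at z)"
  shows "dd (a z) (\<lambda>y. dd (b y) f y) z - dd (b z) (\<lambda>y. dd (a y) f y) z
    = dd (b' (a z) - a' (b z)) f z"
  using dd_eq_derivative[OF has_derivative_dd_field[OF f assms(3)]]
    dd_eq_derivative[OF has_derivative_dd_field[OF f assms(2)]]
    smooth_fun_dd_commute[OF f] linear_diff[OF linear_dd[OF smooth_fun_differentiable[OF f]]]
  by simp

lemma hom_poly_scaleR:
  assumes "hom_poly k g"
  shows "g (r *\<^sub>R \<xi>) = r ^ k * g \<xi>"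
proof -
  obtain A c where A: "\<forall>\<alpha>\<in>A. (\<Sum>b\<in>Basis. \<alpha> b) = k"
    and g: "\<And>\<eta>. g \<eta> = (\<Sum>\<alpha>\<in>A. c \<alpha> * (\<Prod>b\<in>Basis. (\<eta> \<bullet> b) ^ \<alpha> b))"
    using assms unfolding hom_poly_def by blast
  have monomial: "(\<Prod>b\<in>Basis. ((r *\<^sub>R \<xi>) \<bullet> b) ^ \<alpha> b) = r ^ k * (\<Prod>b\<in>Basis. (\<xi> \<bullet> b) ^ \<alpha> b)"
    if "\<alpha> \<in> A" for \<alpha>
  proof -
    have "(\<Prod>b\<in>Basis. ((r *\<^sub>R \<xi>) \<bullet> b) ^ \<alpha> b)
        = r ^ (\<Sum>b\<in>Basis. \<alpha> b) * (\<Prod>b\<in>Basis. (\<xi> \<bullet> b) ^ \<alpha> b)"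
      by (simp add: power_mult_distrib prod.distrib power_sum)
    then show ?thesis using A that by simp
  qed
  have "g (r *\<^sub>R \<xi>) = (\<Sum>\<alpha>\<in>A. c \<alpha> * (r ^ k * (\<Prod>b\<in>Basis. (\<xi> \<bullet> b) ^ \<alpha> b)))"
    unfolding g by (rule sum.cong[OF refl]) (simp only: monomial)
  then show ?thesis
    unfolding g by (simp add: sum_distrib_left ac_simps)
qed

lemma Rk_dd_fibre_Euler:
  assumes "S \<in> Rk k"
  shows "dd (0, snd z) S z = real k * S z"
proof -
  obtain x \<xi> where z: "z = (x, \<xi>)" by (cases z)
  have "hom_poly k (\<lambda>\<xi>. S (x, \<xi>))"
    using assms unfolding Rk_def by blast
  then have "S (z + s *\<^sub>R (0, snd z)) = (1 + s) ^ k * S z" for s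
    using hom_poly_scaleR[of k "\<lambda>\<xi>. S (x, \<xi>)" "1 + s" \<xi>] by (simp add: z algebra_simps)
  moreover have "((\<lambda>s. (1 + s) ^ k * S z) has_real_derivative real k * S z) (at 0)"
    by (auto intro!: derivative_eq_intros)
  ultimately show ?thesis
    unfolding dd_def by (simp add: DERIV_imp_deriv)
qed

lemma dd_sum_axis:
  fixes E :: "real^'n::finite \<Rightarrow> 'a::real_normed_vector"
  assumes "f differentiable (at z)" "linear E"
  shows "(\<Sum>i\<in>UNIV. c i * dd (E (axis i 1)) f z) = dd (E (\<chi> i. c i)) f z"
proof -
  have "(\<chi> i. c i) = (\<Sum>i\<in>UNIV. c i *\<^sub>R axis i (1::real))"
    by (simp add: vec_eq_iff axis_def if_distrib cong: if_cong)
  moreover have L: "linear (\<lambda>x. dd (E x) f z)"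
    using linear_compose[OF assms(2) linear_dd[OF assms(1)]] by (simp add: o_def)
  ultimately show ?thesis
    by (simp add: real_vector.linear_sum[OF L] linear_cmul[OF L])
qed

definition ialpha_field :: "('n::finite) pt \<times> 'n pt \<Rightarrow> 'n pt \<times> 'n pt" where
  "ialpha_field z = (0, ((1/2) *\<^sub>R fst (snd (fst z)), (-(1/2)) *\<^sub>R fst (fst z), -(1/2)))"

definition ialpha_field_deriv :: "('n::finite) pt \<times> 'n pt \<Rightarrow> 'n pt \<times> 'n pt" where
  "ialpha_field_deriv w = (0, ((1/2) *\<^sub>R fst (snd (fst w)), (-(1/2)) *\<^sub>R fst (fst w), 0))"

definition Dop_field :: "('n::finite) pt \<times> 'n pt \<Rightarrow> 'n pt \<times> 'n pt" where
  "Dop_field z = ((xt z *\<^sub>R fst (fst z) - fst (snd (snd z)),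
      fst (snd z) + xt z *\<^sub>R fst (snd (fst z)),
      -(fst (snd (fst z)) \<bullet> fst (snd (snd z)) + fst (fst z) \<bullet> fst (snd z))), 0)"

definition Dop_field_deriv :: "('n::finite) pt \<times> 'n pt \<Rightarrow> 'n pt \<times> 'n pt \<Rightarrow> 'n pt \<times> 'n pt" where
  "Dop_field_deriv z w = ((xt w *\<^sub>R fst (fst z) + xt z *\<^sub>R fst (fst w) - fst (snd (snd w)),
      fst (snd w) + xt w *\<^sub>R fst (snd (fst z)) + xt z *\<^sub>R fst (snd (fst w)),
      -(fst (snd (fst w)) \<bullet> fst (snd (snd z)) + fst (snd (fst z)) \<bullet> fst (snd (snd w))
        + fst (fst w) \<bullet> fst (snd z) + fst (fst z) \<bullet> fst (snd w))), 0)"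

lemma has_derivative_ialpha_field: "(ialpha_field has_derivative ialpha_field_deriv) (at z)"
  unfolding ialpha_field_def[abs_def] ialpha_field_deriv_def[abs_def]
  by (auto intro!: derivative_eq_intros)

lemma has_derivative_Dop_field: "(Dop_field has_derivative Dop_field_deriv z) (at z)"
  unfolding Dop_field_def[abs_def] Dop_field_deriv_def[abs_def] xt_def
  by (auto intro!: derivative_eq_intros simp: algebra_simps)

lemma has_derivative_xt: "(xt has_derivative xt) (at z)"
  unfolding xt_def[abs_def] by (auto intro!: derivative_eq_intros)

lemma Lie_bracket_ialpha_Dop_field:
  "Dop_field_deriv z (ialpha_field z) - ialpha_field_deriv (Dop_field z)
    = (-(1/2)) *\<^sub>R (0, snd z) - xt z *\<^sub>R ialpha_field z"
  by (cases z) (auto simp: Dop_field_deriv_def ialpha_field_deriv_def ialpha_field_def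
      Dop_field_def xt_def algebra_simps inner_commute zero_prod_def)

lemma ialpha_eq_dd_field:
  fixes T :: "('n::finite) sym"
  assumes T: "T differentiable (at z)"
  shows "ialpha T z = dd (ialpha_field z) T z"
proof -
  let ?q = "fst (fst z)" and ?p = "fst (snd (fst z))"
  have L: "linear (\<lambda>v. dd v T z)" by (rule linear_dd[OF T])
  have "(\<Sum>i\<in>UNIV. cp i z * d_xq i T z) = dd (0, (?p, 0, 0)) T z"
    using dd_sum_axis[OF T, of "\<lambda>x. (0, (x, 0, 0))"] by (simp add: d_xq_def cp_def linearI)
  moreover have "(\<Sum>i\<in>UNIV. cq i z * d_xp i T z) = dd (0, (0, ?q, 0)) T z"
    using dd_sum_axis[OF T, of "\<lambda>x. (0, (0, x, 0))"] by (simp add: d_xp_def cq_def linearI)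
  ultimately have "ialpha T z
      = (1/2) * (dd (0, (?p, 0, 0)) T z - dd (0, (0, ?q, 0)) T z - dd (0, (0, 0, 1)) T z)"
    by (simp add: ialpha_def sum_subtractf d_xt_def)
  also have "\<dots> = dd ((1/2) *\<^sub>R ((0, (?p, 0, 0)) - (0, (0, ?q, 0)) - (0, (0, 0, 1)))) T z"
    by (simp only: linear_cmul[OF L] linear_diff[OF L]) simp
  also have "(1/2) *\<^sub>R ((0, (?p, 0, 0)) - (0, (0, ?q, 0)) - (0, (0, 0, 1))) = ialpha_field z"
    by (simp add: ialpha_field_def)
  finally show ?thesis .
qed

lemma Dop_eq_dd_field:
  fixes T :: "('n::finite) sym"
  assumes T: "T differentiable (at z)"
  shows "Dop T z = dd (Dop_field z) T z"
proof -
  let ?q = "fst (fst z)" and ?p = "fst (snd (fst z))" and ?\<xi>q = "fst (snd z)"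
    and ?\<xi>p = "fst (snd (snd z))"
  have L: "linear (\<lambda>v. dd v T z)" by (rule linear_dd[OF T])
  have "(\<Sum>i\<in>UNIV. xq i z * d_p i T z) = dd ((0, ?\<xi>q, 0), 0) T z"
    using dd_sum_axis[OF T, of "\<lambda>x. ((0, x, 0), 0)"] by (simp add: d_p_def xq_def linearI)
  moreover have "(\<Sum>i\<in>UNIV. xp i z * d_q i T z) = dd ((?\<xi>p, 0, 0), 0) T z"
    using dd_sum_axis[OF T, of "\<lambda>x. ((x, 0, 0), 0)"] by (simp add: d_q_def xp_def linearI)
  moreover have "(\<Sum>i\<in>UNIV. cp i z * d_p i T z) = dd ((0, ?p, 0), 0) T z"
    using dd_sum_axis[OF T, of "\<lambda>x. ((0, x, 0), 0)"] by (simp add: d_p_def cp_def linearI)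
  moreover have "(\<Sum>i\<in>UNIV. cq i z * d_q i T z) = dd ((?q, 0, 0), 0) T z"
    using dd_sum_axis[OF T, of "\<lambda>x. ((x, 0, 0), 0)"] by (simp add: d_q_def cq_def linearI)
  moreover have "Es_xi z = ?p \<bullet> ?\<xi>p + ?q \<bullet> ?\<xi>q"
    by (simp add: Es_xi_def inner_vec_def sum.distrib cp_def xp_def cq_def xq_def)
  ultimately have "Dop T z = dd ((0, ?\<xi>q, 0), 0) T z - dd ((?\<xi>p, 0, 0), 0) T z
      + xt z * (dd ((0, ?p, 0), 0) T z + dd ((?q, 0, 0), 0) T z)
      - (?p \<bullet> ?\<xi>p + ?q \<bullet> ?\<xi>q) * dd ((0, 0, 1), 0) T z"
    by (simp add: Dop_def Es_def sum_subtractf sum.distrib d_t_def)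
  also have "\<dots> = dd (((0, ?\<xi>q, 0), 0) - ((?\<xi>p, 0, 0), 0)
      + xt z *\<^sub>R (((0, ?p, 0), 0) + ((?q, 0, 0), 0))
      - (?p \<bullet> ?\<xi>p + ?q \<bullet> ?\<xi>q) *\<^sub>R ((0, 0, 1), 0)) T z"
    by (simp only: linear_cmul[OF L] linear_diff[OF L] linear_add[OF L]) simp
  also have "((0, ?\<xi>q, 0), 0) - ((?\<xi>p, 0, 0), 0) + xt z *\<^sub>R (((0, ?p, 0), 0) + ((?q, 0, 0), 0))
      - (?p \<bullet> ?\<xi>p + ?q \<bullet> ?\<xi>q) *\<^sub>R ((0, 0, 1), 0) = Dop_field z"
    by (simp add: Dop_field_def algebra_simps)
  finally show ?thesis .
qed

lemma Hop_ialpha_commutator: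
  fixes S :: "('n::finite) sym"
  assumes S: "\<And>z. S differentiable (at z)"
  shows "Hop \<delta> (m - 1) (ialpha S) - ialpha (Hop \<delta> m S) = ialpha S"
proof
  fix z
  have "Hop \<delta> m S = (\<lambda>y. hk CARD('n) \<delta> m * S y)"
    by (simp add: fun_eq_iff Hop_def)
  then have "ialpha (Hop \<delta> m S) z = hk CARD('n) \<delta> m * ialpha S z"
    using S by (simp add: ialpha_eq_dd_field dd_cmult)
  then show "(Hop \<delta> (m - 1) (ialpha S) - ialpha (Hop \<delta> m S)) z = ialpha S z"
    by (simp add: Hop_def hk_def algebra_simps)
qed

lemma Hop_Xop_commutator:
  fixes S :: "('n::finite) sym"
  assumes S: "\<And>z. S differentiable (at z)"
  shows "Hop \<delta> (m + 1) (Xop \<delta> m S) - Xop \<delta> m (Hop \<delta> m S) = - Xop \<delta> m S"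
proof
  fix z
  have "Hop \<delta> m S = (\<lambda>y. hk CARD('n) \<delta> m * S y)"
    by (simp add: fun_eq_iff Hop_def)
  then have "Xop \<delta> m (Hop \<delta> m S) z
      = hk CARD('n) \<delta> m * dd (Dop_field z) S z
        + (2 * (real CARD('n) + 1) * \<delta> + of_int m) * xt z * (hk CARD('n) \<delta> m * S z)"
    using S by (simp add: Xop_def Dop_eq_dd_field dd_cmult)
  then have "Xop \<delta> m (Hop \<delta> m S) z = hk CARD('n) \<delta> m * Xop \<delta> m S z"
    using S by (simp add: Xop_def Dop_eq_dd_field algebra_simps)
  then show "(Hop \<delta> (m + 1) (Xop \<delta> m S) - Xop \<delta> m (Hop \<delta> m S)) z = (- Xop \<delta> m S) z"
    by (simp add: Hop_def hk_def algebra_simps)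
qed

lemma ialpha_Xop_commutator:
  fixes S :: "('n::finite) sym"
  assumes "S \<in> Rk k"
  shows "ialpha (Xop \<delta> (int k) S) - Xop \<delta> (int k - 1) (ialpha S) = Hop \<delta> (int k) S"
proof
  fix z
  let ?a = "ialpha_field :: 'n pt \<times> 'n pt \<Rightarrow> _" and ?b = Dop_field
  define c where "c m = 2 * (real CARD('n) + 1) * \<delta> + of_int m" for m
  have f: "smooth_fun S" using assms by (simp add: Rk_def)
  have S: "S differentiable (at y)" for y by (rule smooth_fun_differentiable[OF f])
  have bS: "(\<lambda>y. dd (?b y) S y) differentiable (at y)" for y
    using has_derivative_dd_field[OF f has_derivative_Dop_field] by (rule differentiableI)
  have aS: "(\<lambda>y. dd (?a y) S y) differentiable (at y)" for y
    using has_derivative_dd_field[OF f has_derivative_ialpha_field] by (rule differentiableI)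
  have xt_diff: "(xt :: 'n pt \<times> 'n pt \<Rightarrow> real) differentiable (at y)" for y
    using has_derivative_xt by (rule differentiableI)
  have X: "Xop \<delta> m T = (\<lambda>y. dd (?b y) T y + c m * (xt y * T y))"
    if "\<And>y. T differentiable (at y)" for m and T :: "'n sym"
    using that by (simp add: fun_eq_iff Xop_def Dop_eq_dd_field c_def)
  have I: "ialpha S = (\<lambda>y. dd (?a y) S y)"
    using S by (simp add: fun_eq_iff ialpha_eq_dd_field)
  have ialpha_X: "ialpha (Xop \<delta> (int k) S) z
      = dd (?a z) (\<lambda>y. dd (?b y) S y) z + c k * (xt z * dd (?a z) S z + xt (?a z) * S z)"
    using S bS xt_diff
    by (simp add: X ialpha_eq_dd_field dd_add dd_cmult dd_mult dd_eq_derivative[OF has_derivative_xt])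
  have X_ialpha: "Xop \<delta> (int k - 1) (ialpha S) z
      = dd (?b z) (\<lambda>y. dd (?a y) S y) z + c (int k - 1) * (xt z * dd (?a z) S z)"
    using aS by (simp add: I X)
  have "dd (?a z) (\<lambda>y. dd (?b y) S y) z - dd (?b z) (\<lambda>y. dd (?a y) S y) z
      = dd ((-(1/2)) *\<^sub>R (0, snd z) - xt z *\<^sub>R ?a z) S z"
    using dd_field_commutator[OF f has_derivative_ialpha_field has_derivative_Dop_field]
    by (simp only: Lie_bracket_ialpha_Dop_field)
  also have "\<dots> = - (1/2) * (real k * S z) - xt z * dd (?a z) S z"
    using Rk_dd_fibre_Euler[OF assms]
    by (simp only: linear_diff[OF linear_dd[OF S]] linear_cmul[OF linear_dd[OF S]]) simp
  finally have bracket: "dd (?a z) (\<lambda>y. dd (?b y) S y) z - dd (?b z) (\<lambda>y. dd (?a y) S y) z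
      = - (1/2) * (real k * S z) - xt z * dd (?a z) S z" .
  have "xt (?a z) = - 1/2"
    by (simp add: xt_def ialpha_field_def)
  with ialpha_X X_ialpha bracket
  show "(ialpha (Xop \<delta> (int k) S) - Xop \<delta> (int k - 1) (ialpha S)) z = Hop \<delta> (int k) S z"
    by (simp add: I Hop_def hk_def c_def algebra_simps)
qed

theorem proposition4p2:
  fixes \<delta> :: real and k :: nat and S :: "('n::finite) sym"
  assumes "S \<in> Rk k"
  shows "ialpha (Xop \<delta> (int k) S) - Xop \<delta> (int k - 1) (ialpha S) = Hop \<delta> (int k) S
    \<and> Hop \<delta> (int k - 1) (ialpha S) - ialpha (Hop \<delta> (int k) S) = ialpha S
    \<and> Hop \<delta> (int k + 1) (Xop \<delta> (int k) S) - Xop \<delta> (int k) (Hop \<delta> (int k) S) = - Xop \<delta> (int k) S"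
proof -
  have "\<And>z. S differentiable (at z)"
    using assms by (simp add: Rk_def smooth_fun_differentiable)
  then show ?thesis
    using ialpha_Xop_commutator[OF assms] Hop_ialpha_commutator Hop_Xop_commutator by blast
qed

end
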